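(* Let $p>\alpha+2>0$, assume $6p^2-11p+4\ge0$ and $p\neq\tfrac13$, and suppose $$\frac{6p^3-29p^2+17p-2-2p\sqrt{6p^2-11p+4}}{(3p-1)^2}\le\alpha\le\frac{6p^3-29p^2+17p-2+2p\sqrt{6p^2-11p+4}}{(3p-1)^2}.$$ Then $F_{p,\alpha}(r)\le 0$ for all $r\in(0,1]$, where $$F_{p,\alpha}(r)=r^{\,p-4-\frac{3\alpha}{2}}\int_0^{\frac{2r}{1+r}}\frac{t^{\frac{\alpha+2}{p}-1}}{(1-t)^{\frac{\alpha+2}{p}}}\,dt-\int_0^1\frac{t^{\frac{\alpha+2}{p}-1}}{(1-t)^{\frac{\alpha+2}{p}}}\,dt .$$
   Context: For $p>\alpha+2>0$ the integral $\int_0^1 t^{\frac{\alpha+2}{p}-1}(1-t)^{-\frac{\alpha+2}{p}}\,dt$ equals $B\!\left(\frac{\alpha+2}{p},1-\frac{\alpha+2}{p}\right)=\pi/\sin\frac{(\alpha+2)\pi}{p}$, so $F_{p,\alpha}$ is well defined on $(0,1]$. *)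

theory Defs
  imports "HOL-Analysis.Analysis"
begin

text \<open>The integrals are Henstock-Kurzweil integrals over [0,x]; the endpoints are
  a null set, and the integrand is nonnegative, so this coincides with the
  (improper / Lebesgue) integral of the paper.\<close>
definition Fint :: "real \<Rightarrow> real \<Rightarrow> real \<Rightarrow> real" where
  "Fint p \<alpha> t = t powr ((\<alpha> + 2) / p - 1) / (1 - t) powr ((\<alpha> + 2) / p)"

definition F :: "real \<Rightarrow> real \<Rightarrow> real \<Rightarrow> real" where
  "F p \<alpha> r = r powr (p - 4 - 3 * \<alpha> / 2) * integral {0 .. 2 * r / (1 + r)} (Fint p \<alpha>)
              - integral {0 .. 1} (Fint p \<alpha>)"

end

(*
  Write I(x) for the integral of the Beta(c, 1 - c) density t^(c-1) (1-t)^(-c) over [0, x],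
  with c = (alpha + 2)/p in (0, 1), and e for the exponent p - 4 - 3 alpha/2.  Then
  F(r) = r^e I(2r/(1+r)) - I(1), and G(r) = r^e I(2r/(1+r)) has G'(r) = r^(e-1) H(r), where
  H(r) = e I(2r/(1+r)) + w(r) with w(r) = r (d/dr) I(2r/(1+r)) = (2r/(1-r))^c / (1+r).
  Since H(0) = 0 and H'(r) = w(r)/r * Q(r)/(1 - r^2) with the quadratic
  Q(r) = (e + c) + (c - 1) r + (1 - e) r^2, it suffices that Q >= 0, i.e. that its
  discriminant is nonpositive; the bounds on alpha are exactly the roots of that discriminant
  viewed as a quadratic in alpha.  Then H >= 0, G is nondecreasing and G(r) <= G(1) = I(1).
*)
theory Submission
  imports Defs "HOL-Library.Quadratic_Discriminant"
begin

lemma square_le_square_if_between: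
  fixes m a b x :: real
  assumes "0 < m" and "(a - b) / m \<le> x" "x \<le> (a + b) / m"
  shows "(m * x - a)^2 \<le> b^2"
proof -
  have "a - b \<le> m * x" "m * x \<le> a + b"
    using assms by (simp_all add: pos_divide_le_eq pos_le_divide_eq mult.commute)
  then have "\<bar>m * x - a\<bar> \<le> \<bar>b\<bar>"
    by linarith
  then show ?thesis
    by (simp add: abs_le_square_iff)
qed

lemma quadratic_nonneg_if_discrim_nonpos:
  fixes a b c x :: real
  assumes "discrim a b c \<le> 0" and "0 < a + b + c"
  shows "0 \<le> a * x^2 + b * x + c"
proof -
  have "0 \<le> 4 * a * (a * y^2 + b * y + c)" for y
  proof -
    have "4 * a * (a * y^2 + b * y + c) = (2 * a * y + b)^2 - discrim a b c"
      by (simp add: discrim_def algebra_simps power2_eq_square)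
    then show ?thesis
      using assms(1) zero_le_power2[of "2 * a * y + b"] by linarith
  qed
  then have nonneg: "0 \<le> a * (a * y^2 + b * y + c)" for y
    by (simp add: zero_le_mult_iff)
  from nonneg[of 1] have "0 \<le> a"
    using assms(2) by (simp add: zero_le_mult_iff)
  show ?thesis
  proof (cases "a = 0")
    case True
    then have "b = 0"
      using assms(1) by (simp add: discrim_def)
    then show ?thesis
      using True assms(2) by simp
  next
    case False
    then show ?thesis
      using \<open>0 \<le> a\<close> nonneg[of x] by (simp add: zero_le_mult_iff)
  qed
qed

lemma discrim_nonpos_if_alpha_between_bounds:
  fixes p \<alpha> :: real
  assumes "6 * p^2 - 11 * p + 4 \<ge> 0" and "p \<noteq> 1 / 3"
    and "(6 * p^3 - 29 * p^2 + 17 * p - 2 - 2 * p * sqrt (6 * p^2 - 11 * p + 4)) / (3 * p - 1)^2 \<le> \<alpha>"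
    and "\<alpha> \<le> (6 * p^3 - 29 * p^2 + 17 * p - 2 + 2 * p * sqrt (6 * p^2 - 11 * p + 4)) / (3 * p - 1)^2"
  defines "e \<equiv> p - 4 - 3 * \<alpha> / 2"
  shows "discrim (p - p * e) (\<alpha> + 2 - p) (p * e + \<alpha> + 2) \<le> 0"
proof -
  define m where "m = (3 * p - 1)^2"
  define a where "a = 6 * p^3 - 29 * p^2 + 17 * p - 2"
  have "0 < m"
    using assms(2) by (simp add: m_def)
  have "(m * \<alpha> - a)^2 \<le> (2 * p * sqrt (6 * p^2 - 11 * p + 4))^2"
    using square_le_square_if_between[OF \<open>0 < m\<close>] assms(3,4) by (simp add: m_def a_def)
  also have "\<dots> = 4 * p^2 * (6 * p^2 - 11 * p + 4)"
    using assms(1) by (simp add: power_mult_distrib)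
  finally have "(m * \<alpha> - a)^2 \<le> 4 * p^2 * (6 * p^2 - 11 * p + 4)" .
  moreover have "m * discrim (p - p * e) (\<alpha> + 2 - p) (p * e + \<alpha> + 2)
      = (m * \<alpha> - a)^2 - 4 * p^2 * (6 * p^2 - 11 * p + 4)"
    by (simp add: m_def a_def e_def discrim_def algebra_simps power2_eq_square power3_eq_cube)
  ultimately have "m * discrim (p - p * e) (\<alpha> + 2 - p) (p * e + \<alpha> + 2) \<le> 0"
    by simp
  then show ?thesis
    using \<open>0 < m\<close> by (simp add: mult_le_0_iff)
qed

definition beta_density :: "real \<Rightarrow> real \<Rightarrow> real" where
  "beta_density c t = t powr (c - 1) / (1 - t) powr c"

definition beta_primitive :: "real \<Rightarrow> real \<Rightarrow> real" where
  "beta_primitive c x = integral {0..x} (beta_density c)"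

definition beta_weight :: "real \<Rightarrow> real \<Rightarrow> real" where
  "beta_weight c r = (2 * r / (1 - r)) powr c / (1 + r)"

lemma beta_density_integrable:
  assumes "0 < c" "c < 1"
  shows "beta_density c integrable_on {0..1}"
proof -
  have "beta_density c = (\<lambda>t. t powr (c - 1) * (1 - t) powr ((1 - c) - 1))"
    by (auto simp: beta_density_def powr_minus_divide)
  then show ?thesis
    using integrable_Beta'[of c "1 - c"] assms by simp
qed

lemma continuous_on_beta_primitive:
  assumes "0 < c" "c < 1"
  shows "continuous_on {0..1} (beta_primitive c)"
  unfolding beta_primitive_def
  by (rule indefinite_integral_continuous_1[OF beta_density_integrable[OF assms]])

lemma has_real_derivative_beta_primitive:
  assumes "0 < c" "c < 1" and "0 < x" "x < 1"
  shows "(beta_primitive c has_real_derivative beta_density c x) (at x)"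
proof -
  have "continuous (at x) (beta_density c)"
    unfolding beta_density_def using assms(3,4)
    by (intro continuous_intros) auto
  then have "continuous (at x within {0..1}) (beta_density c)"
    by (rule continuous_at_imp_continuous_within)
  then have "(beta_primitive c has_vector_derivative beta_density c x) (at x within {0..1})"
    using integral_has_vector_derivative_continuous_at[OF beta_density_integrable[OF assms(1,2)], of x "{}"]
      assms(3,4) by (simp add: beta_primitive_def[abs_def])
  moreover have "at x within {0..1} = at x"
    using assms(3,4) by (simp add: at_within_Icc_at)
  ultimately show ?thesis
    by (simp add: has_real_derivative_iff_has_vector_derivative)
qed

lemma beta_density_moebius:
  assumes "0 < r" "r < 1"
  shows "beta_density c (2 * r / (1 + r)) * (2 / (1 + r)^2) = beta_weight c r / r"
proof -
  define x where "x = 2 * r / (1 + r)"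
  have x_pos: "0 < x"
    using assms by (simp add: x_def)
  have one_minus_x: "1 - x = (1 - r) / (1 + r)"
    using assms by (simp add: x_def field_simps)
  have "x * (1 + r) = 2 * r"
    using assms by (simp add: x_def)
  then have odds: "x / (1 - x) = 2 * r / (1 - r)"
    using assms by (simp add: one_minus_x field_simps)
  have "beta_density c x = (x / (1 - x)) powr c / x"
    using x_pos assms by (simp add: beta_density_def one_minus_x powr_diff powr_divide powr_mult)
  also have "\<dots> = (2 * r / (1 - r)) powr c / x"
    by (simp only: odds)
  also have "\<dots> * (2 / (1 + r)^2) = beta_weight c r / r"
    using assms by (simp add: x_def beta_weight_def divide_simps power2_eq_square)
  finally show ?thesis
    by (simp add: x_def)
qed

lemma has_real_derivative_beta_primitive_moebius:
  assumes "0 < c" "c < 1" and "0 < r" "r < 1"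
  shows "((\<lambda>t. beta_primitive c (2 * t / (1 + t))) has_real_derivative beta_weight c r / r) (at r)"
proof -
  have "((\<lambda>t. 2 * t / (1 + t)) has_real_derivative 2 / (1 + r)^2) (at r)"
    using assms by (auto intro!: derivative_eq_intros simp: field_simps power2_eq_square)
  moreover have "0 < 2 * r / (1 + r)" "2 * r / (1 + r) < 1"
    using assms by (simp_all add: field_simps)
  ultimately have "((\<lambda>t. beta_primitive c (2 * t / (1 + t))) has_real_derivative
      beta_density c (2 * r / (1 + r)) * (2 / (1 + r)^2)) (at r)"
    by (intro DERIV_chain2[OF has_real_derivative_beta_primitive[OF assms(1,2)]])
  then show ?thesis
    by (simp only: beta_density_moebius[OF assms(3,4)])
qed

lemma has_real_derivative_beta_weight:
  assumes "0 < r" "r < 1"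
  shows "(beta_weight c has_real_derivative
           beta_weight c r * (c / (r * (1 - r)) - 1 / (1 + r))) (at r)"
proof -
  define u where "u = 2 * r / (1 - r)"
  have u_pos: "0 < u"
    using assms by (simp add: u_def)
  have odds_deriv: "((\<lambda>t. 2 * t / (1 - t)) has_real_derivative 2 / (1 - r)^2) (at r)"
    using assms by (auto intro!: derivative_eq_intros simp: field_simps power2_eq_square)
  have powr_deriv: "((\<lambda>t. (2 * t / (1 - t)) powr c) has_real_derivative
      c * u powr (c - 1) * (2 / (1 - r)^2)) (at r)"
    using DERIV_fun_powr[OF odds_deriv, of c] u_pos by (simp add: u_def)
  have "((\<lambda>t. 1 + t) has_real_derivative 1) (at r)"
    by (auto intro!: derivative_eq_intros)
  from DERIV_divide[OF powr_deriv this] assms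
  have "(beta_weight c has_real_derivative
      (c * u powr (c - 1) * (2 / (1 - r)^2) * (1 + r) - u powr c * 1) / ((1 + r) * (1 + r))) (at r)"
    by (simp add: beta_weight_def[abs_def] u_def)
  moreover have "(c * u powr (c - 1) * (2 / (1 - r)^2) * (1 + r) - u powr c * 1) / ((1 + r) * (1 + r))
      = beta_weight c r * (c / (r * (1 - r)) - 1 / (1 + r))"
    using assms u_pos
    by (simp add: beta_weight_def powr_diff u_def divide_simps power2_eq_square)
      (simp add: algebra_simps)
  ultimately show ?thesis
    by simp
qed

lemma beta_weight_nonneg: "0 \<le> r \<Longrightarrow> 0 \<le> beta_weight c r"
  by (simp add: beta_weight_def)

lemma continuous_on_beta_weight:
  assumes "0 < c" "s < 1"
  shows "continuous_on {0..s} (beta_weight c)"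
  unfolding beta_weight_def[abs_def] using assms
  by (intro continuous_intros continuous_on_powr') auto

lemma continuous_on_beta_primitive_moebius:
  assumes "0 < c" "c < 1" "0 \<le> a" "b \<le> 1"
  shows "continuous_on {a..b} (\<lambda>r. beta_primitive c (2 * r / (1 + r)))"
proof (rule continuous_on_compose2[OF continuous_on_beta_primitive[OF assms(1,2)]])
  show "continuous_on {a..b} (\<lambda>r. 2 * r / (1 + r))"
    using assms by (intro continuous_intros) auto
  show "(\<lambda>r. 2 * r / (1 + r)) ` {a..b} \<subseteq> {0..1}"
    using assms by (auto simp: field_simps)
qed

lemma euler_operator_beta_primitive_moebius_nonneg:
  assumes "0 < c" "c < 1"
    and quadratic_nonneg: "\<And>x. 0 < x \<Longrightarrow> x < 1 \<Longrightarrow> 0 \<le> (e + c) + (c - 1) * x + (1 - e) * x^2"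
    and "0 \<le> s" "s < 1"
  shows "0 \<le> e * beta_primitive c (2 * s / (1 + s)) + beta_weight c s"
proof -
  define H where "H r = e * beta_primitive c (2 * r / (1 + r)) + beta_weight c r" for r
  have "H 0 \<le> H s"
  proof (rule DERIV_nonneg_imp_increasing_open[OF \<open>0 \<le> s\<close>])
    fix x assume x: "0 < x" "x < s"
    then have "x < 1"
      using \<open>s < 1\<close> by simp
    have "(H has_real_derivative e * (beta_weight c x / x)
        + beta_weight c x * (c / (x * (1 - x)) - 1 / (1 + x))) (at x)"
      unfolding H_def[abs_def] using assms(1,2) x \<open>x < 1\<close>
      by (intro DERIV_add DERIV_cmult has_real_derivative_beta_primitive_moebius
          has_real_derivative_beta_weight) auto
    moreover have "e * (beta_weight c x / x) + beta_weight c x * (c / (x * (1 - x)) - 1 / (1 + x))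
        = beta_weight c x / x * (((e + c) + (c - 1) * x + (1 - e) * x^2) / ((1 + x) * (1 - x)))"
      using x \<open>x < 1\<close> by (simp add: divide_simps power2_eq_square) (simp add: algebra_simps)
    moreover have "0 \<le> beta_weight c x / x * (((e + c) + (c - 1) * x + (1 - e) * x^2) / ((1 + x) * (1 - x)))"
      using x \<open>x < 1\<close> quadratic_nonneg[of x] beta_weight_nonneg[of x c] by simp
    ultimately show "\<exists>y. (H has_real_derivative y) (at x) \<and> 0 \<le> y"
      by auto
  next
    show "continuous_on {0..s} H"
      unfolding H_def[abs_def] using assms
      by (intro continuous_intros continuous_on_beta_primitive_moebius continuous_on_beta_weight) auto
  qed
  moreover have "H 0 = 0"
    by (simp add: H_def beta_primitive_def beta_weight_def)
  ultimately show ?thesis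
    by (simp add: H_def)
qed

lemma beta_primitive_moebius_scaled_le:
  assumes "0 < c" "c < 1"
    and quadratic_nonneg: "\<And>x. 0 < x \<Longrightarrow> x < 1 \<Longrightarrow> 0 \<le> (e + c) + (c - 1) * x + (1 - e) * x^2"
    and "0 < r" "r \<le> 1"
  shows "r powr e * beta_primitive c (2 * r / (1 + r)) \<le> beta_primitive c 1"
proof -
  define G where "G x = x powr e * beta_primitive c (2 * x / (1 + x))" for x
  have "G r \<le> G 1"
  proof (rule DERIV_nonneg_imp_increasing_open[OF \<open>r \<le> 1\<close>])
    fix x assume x: "r < x" "x < 1"
    then have "0 < x"
      using \<open>0 < r\<close> by simp
    have "(G has_real_derivative e * x powr (e - 1) * beta_primitive c (2 * x / (1 + x))
        + x powr e * (beta_weight c x / x)) (at x)"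
      unfolding G_def[abs_def] using assms(1,2) x \<open>0 < x\<close>
      by (auto intro!: derivative_eq_intros has_real_derivative_beta_primitive_moebius)
    moreover have "e * x powr (e - 1) * beta_primitive c (2 * x / (1 + x)) + x powr e * (beta_weight c x / x)
        = x powr e / x * (e * beta_primitive c (2 * x / (1 + x)) + beta_weight c x)"
      using \<open>0 < x\<close> by (simp add: powr_diff field_simps)
    moreover have "0 \<le> x powr e / x * (e * beta_primitive c (2 * x / (1 + x)) + beta_weight c x)"
      using euler_operator_beta_primitive_moebius_nonneg[OF assms(1,2) quadratic_nonneg, of x] \<open>0 < x\<close> x
      by simp
    ultimately show "\<exists>y. (G has_real_derivative y) (at x) \<and> 0 \<le> y"
      by auto
  next
    show "continuous_on {r..1} G"
      unfolding G_def[abs_def] using assms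
      by (intro continuous_intros continuous_on_beta_primitive_moebius) auto
  qed
  then show ?thesis
    by (simp add: G_def)
qed

theorem lemma2p3:
  fixes p \<alpha> :: real
  assumes "p > \<alpha> + 2" and "\<alpha> + 2 > 0"
    and "6 * p^2 - 11 * p + 4 \<ge> 0" and "p \<noteq> 1 / 3"
    and "(6 * p^3 - 29 * p^2 + 17 * p - 2 - 2 * p * sqrt (6 * p^2 - 11 * p + 4)) / (3 * p - 1)^2 \<le> \<alpha>"
    and "\<alpha> \<le> (6 * p^3 - 29 * p^2 + 17 * p - 2 + 2 * p * sqrt (6 * p^2 - 11 * p + 4)) / (3 * p - 1)^2"
  shows "\<forall>r \<in> {0<..1}. F p \<alpha> r \<le> 0"
proof
  fix r :: real assume r: "r \<in> {0<..1}"
  define c where "c = (\<alpha> + 2) / p"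
  define e where "e = p - 4 - 3 * \<alpha> / 2"
  have "0 < p"
    using assms(1,2) by simp
  then have "0 < c" "c < 1"
    using assms(1,2) by (simp_all add: c_def)
  have "0 \<le> (e + c) + (c - 1) * x + (1 - e) * x^2" for x
  proof -
    have "0 \<le> (p - p * e) * x^2 + (\<alpha> + 2 - p) * x + (p * e + \<alpha> + 2)"
      using quadratic_nonneg_if_discrim_nonpos discrim_nonpos_if_alpha_between_bounds[OF assms(3-6)] assms(2)
      by (simp add: e_def)
    also have "\<dots> = p * ((e + c) + (c - 1) * x + (1 - e) * x^2)"
      using \<open>0 < p\<close> by (simp add: c_def field_simps)
    finally show ?thesis
      using \<open>0 < p\<close> by (simp add: zero_le_mult_iff)
  qed
  then have "r powr e * beta_primitive c (2 * r / (1 + r)) \<le> beta_primitive c 1"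
    using beta_primitive_moebius_scaled_le[OF \<open>0 < c\<close> \<open>c < 1\<close>] r by simp
  moreover have "Fint p \<alpha> = beta_density c"
    by (simp add: Fint_def beta_density_def c_def fun_eq_iff)
  ultimately show "F p \<alpha> r \<le> 0"
    by (simp add: F_def beta_primitive_def e_def)
qed

end
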